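(* Let $(X,d)$ be a compact metric space and $F:X\to 2^X$ an expansive, upper semicontinuous set-valued map. If $F$ is open, then the shift $\sigma_{rF}:\mathrm{Orb}_r(X)\to\mathrm{Orb}_r(X)$ has the shadowing property (as a single-valued map on the metric space $(\mathrm{Orb}_r(X),\rho)$).
   Context: $X$ has diameter $1$; $2^X$ is the family of nonempty compact subsets of $X$. $F$ is upper semicontinuous if for every $x$ and open $U\supset F(x)$ there is a neighborhood $V$ of $x$ with $F(y)\subset U$ for $y\in V$. $F$ is open if $F(U)=\bigcup_{u\in U}F(u)$ is open for every open $U$. $\mathrm{Orb}_r(X)=\{(x_0,x_1,\dots)\in X^{\mathbb N}: x_{n+1}\in F(x_n)\ \forall n\}$ with metric $\rho((x_n),(y_n))=\sum_{n\ge0}d(x_n,y_n)/2^{n+1}$; $\sigma_{rF}((x_0,x_1,\dots))=(x_1,x_2,\dots)$. $F$ is expansive if there is $\delta>0$ such that for any $(x_n),(y_n)\in\mathrm{Orb}_r(X)$ with $d(x_n,y_n)<\delta$ for all $n$ one has $x_0=y_0$. A single-valued continuous map $g$ on a metric space $(Z,\rho)$ has the shadowing property if for every $\varepsilon>0$ there is $\delta>0$ such that for every sequence $\{z_n\}_{n\ge0}$ with $\rho(g(z_n),z_{n+1})<\delta$ there is $z\in Z$ with $\rho(g^n(z),z_n)<\varepsilon$ for all $n$. *)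

theory Defs
  imports "HOL-Analysis.Analysis"
begin

definition compact_valued_on :: "'a::metric_space set \<Rightarrow> ('a \<Rightarrow> 'a set) \<Rightarrow> bool" where
  "compact_valued_on X F \<longleftrightarrow> (\<forall>x\<in>X. F x \<noteq> {} \<and> compact (F x) \<and> F x \<subseteq> X)"

definition usc_on :: "'a::metric_space set \<Rightarrow> ('a \<Rightarrow> 'a set) \<Rightarrow> bool" where
  "usc_on X F \<longleftrightarrow> (\<forall>x\<in>X. \<forall>U. openin (top_of_set X) U \<and> F x \<subseteq> U \<longrightarrow>
      (\<exists>V. openin (top_of_set X) V \<and> x \<in> V \<and> (\<forall>y\<in>V. F y \<subseteq> U)))"

definition open_map_on :: "'a::metric_space set \<Rightarrow> ('a \<Rightarrow> 'a set) \<Rightarrow> bool" where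
  "open_map_on X F \<longleftrightarrow> (\<forall>U. openin (top_of_set X) U \<longrightarrow> openin (top_of_set X) (\<Union>u\<in>U. F u))"

definition Orb_r :: "'a set \<Rightarrow> ('a \<Rightarrow> 'a set) \<Rightarrow> (nat \<Rightarrow> 'a) set" where
  "Orb_r X F = {x. (\<forall>n. x n \<in> X) \<and> (\<forall>n. x (Suc n) \<in> F (x n))}"

definition rho :: "(nat \<Rightarrow> 'a::metric_space) \<Rightarrow> (nat \<Rightarrow> 'a) \<Rightarrow> real" where
  "rho x y = (\<Sum>n. dist (x n) (y n) / 2 ^ (n + 1))"

definition shift :: "(nat \<Rightarrow> 'a) \<Rightarrow> (nat \<Rightarrow> 'a)" where
  "shift x = (\<lambda>n. x (Suc n))"

definition expansive_on :: "'a::metric_space set \<Rightarrow> ('a \<Rightarrow> 'a set) \<Rightarrow> bool" where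
  "expansive_on X F \<longleftrightarrow> (\<exists>\<delta>>0. \<forall>x\<in>Orb_r X F. \<forall>y\<in>Orb_r X F.
      (\<forall>n. dist (x n) (y n) < \<delta>) \<longrightarrow> x 0 = y 0)"

definition shadowing_on :: "'b set \<Rightarrow> ('b \<Rightarrow> 'b \<Rightarrow> real) \<Rightarrow> ('b \<Rightarrow> 'b) \<Rightarrow> bool" where
  "shadowing_on Z dm g \<longleftrightarrow> (\<forall>\<epsilon>>0. \<exists>\<delta>>0. \<forall>z::nat \<Rightarrow> 'b. (\<forall>n. z n \<in> Z) \<longrightarrow>
      (\<forall>n. dm (g (z n)) (z (Suc n)) < \<delta>) \<longrightarrow>
      (\<exists>w\<in>Z. \<forall>n. dm ((g ^^ n) w) (z n) < \<epsilon>))"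

end

theory Submission
  imports Defs
begin

text \<open>A pseudo-orbit of the shift is a sequence of orbits \<open>z\<^sub>k\<close> in which \<open>z\<^sub>k(j+1)\<close> is
close to \<open>z\<^sub>k\<^sub>+\<^sub>1(j)\<close> for all \<open>j \<le> M\<close>; summing along diagonals, \<open>z\<^sub>k(i+q)\<close> stays close
to \<open>z\<^sub>k\<^sub>+\<^sub>i(q)\<close>. By compactness, expansivity becomes uniform: orbits that are \<open>c\<close>-close
for \<open>N\<close> steps start \<open>\<gamma>\<close>-close. Openness and upper semicontinuity of \<open>F\<close> give, again
by compactness, a predecessor near \<open>x\<close> for every point near an image of \<open>x\<close>. Starting
from the orbit \<open>z\<^sub>L\<close> and prepending such predecessors, one builds orbits whose \<open>j\<close>-th
point is close to \<open>z\<^sub>j(0)\<close> for \<open>j < L\<close>; a pointwise limit as \<open>L \<rightarrow> \<infinity>\<close> (the set of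
orbits is compact) is an orbit \<open>w\<close> with \<open>w(j)\<close> close to \<open>z\<^sub>j(0)\<close> for all \<open>j\<close>, and the
diagonal estimate then makes \<open>\<sigma>\<^sup>k w\<close> close to \<open>z\<^sub>k\<close> in \<open>\<rho>\<close>.\<close>

lemma summable_rho:
  fixes x y :: "nat \<Rightarrow> 'a::metric_space"
  assumes "\<And>n. dist (x n) (y n) \<le> 1"
  shows "summable (\<lambda>n. dist (x n) (y n) / 2 ^ (n + 1))"
proof (rule summable_comparison_test[OF _ sums_summable[OF power_half_series]])
  show "\<exists>N. \<forall>n\<ge>N. norm (dist (x n) (y n) / 2 ^ (n + 1)) \<le> (1/2::real) ^ Suc n"
    using assms by (auto simp: power_one_over divide_right_mono)
qed

lemma dist_div_le_rho:
  fixes x y :: "nat \<Rightarrow> 'a::metric_space"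
  assumes "\<And>n. dist (x n) (y n) \<le> 1"
  shows "dist (x j) (y j) / 2 ^ (j + 1) \<le> rho x y"
proof -
  have "(\<Sum>n\<in>{j}. dist (x n) (y n) / 2 ^ (n + 1)) \<le> rho x y"
    unfolding rho_def by (rule sum_le_suminf[OF summable_rho[OF assms]]) auto
  thus ?thesis by simp
qed

lemma dist_lt_of_rho_lt:
  fixes x y :: "nat \<Rightarrow> 'a::metric_space"
  assumes "\<And>n. dist (x n) (y n) \<le> 1" and "rho x y < \<eta> / 2 ^ Suc M" and "j \<le> M"
  shows "dist (x j) (y j) < \<eta>"
proof -
  have "dist (x j) (y j) / 2 ^ Suc M \<le> dist (x j) (y j) / 2 ^ Suc j"
    using assms(3) by (intro divide_left_mono power_increasing) auto
  also have "\<dots> \<le> rho x y"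
    using dist_div_le_rho[of x y j] assms(1) by simp
  also have "\<dots> < \<eta> / 2 ^ Suc M"
    by (fact assms(2))
  finally show ?thesis
    by (simp add: divide_less_cancel)
qed

lemma rho_le_of_initial_dist_le:
  fixes x y :: "nat \<Rightarrow> 'a::metric_space"
  assumes "\<And>n. dist (x n) (y n) \<le> 1" and "a \<ge> 0"
    and "\<And>n. n < K \<Longrightarrow> dist (x n) (y n) \<le> a"
  shows "rho x y \<le> a + (1/2)^K"
proof -
  let ?f = "\<lambda>n. dist (x n) (y n) / 2 ^ (n + 1)"
  let ?g = "\<lambda>n. (1/2::real) ^ Suc n"
  have s: "summable ?f" by (rule summable_rho[OF assms(1)])
  have g: "summable ?g" "suminf ?g = 1"
    using power_half_series by (auto simp: sums_iff)
  have "rho x y = (\<Sum>n. ?f (n + K)) + (\<Sum>i<K. ?f i)"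
    unfolding rho_def by (rule suminf_split_initial_segment[OF s])
  also have "(\<Sum>i<K. ?f i) \<le> (\<Sum>i<K. a * ?g i)"
    using assms(3) by (intro sum_mono) (simp add: power_one_over divide_right_mono)
  also have "\<dots> \<le> (\<Sum>i. a * ?g i)"
    using g assms(2) by (intro sum_le_suminf summable_mult) auto
  also have "\<dots> = a" using suminf_mult[OF g(1), of a] g(2) by simp
  also have "(\<Sum>n. ?f (n + K)) \<le> (\<Sum>n. (1/2)^K * ?g n)"
  proof (rule suminf_le)
    show "summable (\<lambda>n. ?f (n + K))" using s by (rule summable_ignore_initial_segment)
    show "summable (\<lambda>n. (1/2)^K * ?g n)" using g by (intro summable_mult)
    show "?f (n + K) \<le> (1/2)^K * ?g n" for n
      using assms(1)[of "n + K"]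
      by (simp add: divide_right_mono power_add power_one_over ac_simps)
  qed
  also have "\<dots> = (1/2)^K" using suminf_mult[OF g(1), of "(1/2)^K"] g(2) by simp
  finally show ?thesis by simp
qed

lemma Orb_r_shift_from: "x \<in> Orb_r X F \<Longrightarrow> (\<lambda>n. x (k + n)) \<in> Orb_r X F"
  unfolding Orb_r_def by auto

lemma funpow_shift: "(shift ^^ k) w = (\<lambda>n. w (k + n))"
  by (induction k) (auto simp: shift_def)

lemma case_nat_in_Orb_r:
  "case_nat u v \<in> Orb_r X F \<longleftrightarrow> u \<in> X \<and> v 0 \<in> F u \<and> v \<in> Orb_r X F"
proof
  assume "case_nat u v \<in> Orb_r X F"
  then have "case_nat u v n \<in> X" "case_nat u v (Suc n) \<in> F (case_nat u v n)" for n
    unfolding Orb_r_def by auto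
  from this[of 0] this[of "Suc n" for n] show "u \<in> X \<and> v 0 \<in> F u \<and> v \<in> Orb_r X F"
    unfolding Orb_r_def by auto
next
  assume "u \<in> X \<and> v 0 \<in> F u \<and> v \<in> Orb_r X F"
  then show "case_nat u v \<in> Orb_r X F"
    unfolding Orb_r_def by (auto split: nat.split)
qed

lemma Orb_r_dist_le_diameter:
  assumes "bounded X" "x \<in> Orb_r X F" "y \<in> Orb_r X F"
  shows "dist (x m) (y n) \<le> diameter X"
  using diameter_bounded_bound[OF assms(1)] assms(2,3) by (simp add: Orb_r_def)

lemma pointwise_convergent_subseq:
  fixes X :: "'a::metric_space set" and f :: "nat \<Rightarrow> nat \<Rightarrow> 'a"
  assumes "compact X" "\<And>k n. f k n \<in> X"
  shows "\<exists>l r. strict_mono r \<and> (\<forall>n. l n \<in> X) \<and> (\<forall>n. (\<lambda>k. f (r k) n) \<longlonglongrightarrow> l n)"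
proof -
  have "compactin (product_topology (\<lambda>i. euclidean) UNIV) (PiE UNIV (\<lambda>_. X))"
    using assms(1) by (simp add: compactin_PiE)
  hence "compact (PiE UNIV (\<lambda>_::nat. X))"
    by (simp add: euclidean_product_topology)
  moreover have "\<forall>k. f k \<in> PiE UNIV (\<lambda>_. X)" using assms(2) by auto
  ultimately obtain l r where l: "l \<in> PiE UNIV (\<lambda>_. X)" "strict_mono r" "(f \<circ> r) \<longlonglongrightarrow> l"
    using seq_compactE[OF compact_imp_seq_compact] by metis
  have "(\<lambda>k. f (r k) n) \<longlonglongrightarrow> l n" for n
  proof -
    have "isCont (\<lambda>x::nat\<Rightarrow>'a. x n) l"
      using continuous_on_eq_continuous_at[of UNIV "\<lambda>x::nat\<Rightarrow>'a. x n"] by simp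
    from isCont_tendsto_compose[OF this l(3)] show ?thesis by (simp add: o_def)
  qed
  with l show ?thesis by auto
qed

lemma usc_closed_graph:
  fixes X :: "'a::metric_space set" and F :: "'a \<Rightarrow> 'a set"
  assumes cv: "compact_valued_on X F" and usc: "usc_on X F"
    and a: "a \<in> X" "\<And>k. a' k \<in> X" "a' \<longlonglongrightarrow> a"
    and b: "\<And>k. b' k \<in> F (a' k)" "b' \<longlonglongrightarrow> b"
  shows "b \<in> F a"
proof (rule ccontr)
  assume "b \<notin> F a"
  have Fa: "F a \<noteq> {}" "compact (F a)" using cv a(1) unfolding compact_valued_on_def by auto
  define r where "r = infdist b (F a)"
  have "r > 0" unfolding r_def
    using infdist_pos_not_in_closed[OF compact_imp_closed[OF Fa(2)] Fa(1) \<open>b \<notin> F a\<close>] .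
  define U where "U = X \<inter> {x. infdist x (F a) < r/2}"
  have "open {x. infdist x (F a) < r/2}"
    by (intro open_Collect_less continuous_on_infdist continuous_on_id continuous_on_const)
  hence "openin (top_of_set X) U" unfolding U_def by (rule openin_open_Int)
  moreover have "F a \<subseteq> U" using cv a(1) \<open>r > 0\<close> unfolding U_def compact_valued_on_def by auto
  ultimately obtain V where V: "openin (top_of_set X) V" "a \<in> V" "\<And>y. y \<in> V \<Longrightarrow> F y \<subseteq> U"
    using usc a(1) unfolding usc_on_def by meson
  then obtain e where "e > 0" "ball a e \<inter> X \<subseteq> V"
    unfolding openin_contains_ball by blast
  have "eventually (\<lambda>k. dist (a' k) a < e) sequentially"
    using a(3) \<open>e > 0\<close> by (simp add: tendsto_iff)
  hence "eventually (\<lambda>k. a' k \<in> V) sequentially"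
    by eventually_elim (use a(2) \<open>ball a e \<inter> X \<subseteq> V\<close> in \<open>auto simp: dist_commute\<close>)
  hence "eventually (\<lambda>k. infdist (b' k) (F a) \<le> r/2) sequentially"
    by eventually_elim (use V(3) b(1) in \<open>force simp: U_def\<close>)
  moreover have "(\<lambda>k. infdist (b' k) (F a)) \<longlonglongrightarrow> infdist b (F a)"
    by (intro tendsto_intros b(2))
  ultimately have "infdist b (F a) \<le> r/2"
    using LIMSEQ_le_const2 unfolding eventually_sequentially by blast
  thus False using \<open>r > 0\<close> unfolding r_def by simp
qed

lemma Orb_r_closed_pointwise:
  fixes X :: "'a::metric_space set" and F :: "'a \<Rightarrow> 'a set" and v :: "nat \<Rightarrow> nat \<Rightarrow> 'a"
  assumes "compact X" "compact_valued_on X F" "usc_on X F"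
    and "\<And>k. v k \<in> Orb_r X F" "\<And>n. (\<lambda>k. v k n) \<longlonglongrightarrow> w n"
  shows "w \<in> Orb_r X F"
proof -
  have w: "w n \<in> X" for n
    using closed_sequentially[OF compact_imp_closed[OF assms(1)], of "\<lambda>k. v k n"] assms(4,5)
    unfolding Orb_r_def by auto
  have "w (Suc n) \<in> F (w n)" for n
    by (rule usc_closed_graph[OF assms(2,3) w, where a'="\<lambda>k. v k n" and b'="\<lambda>k. v k (Suc n)"])
      (use assms(4,5) in \<open>auto simp: Orb_r_def\<close>)
  with w show ?thesis unfolding Orb_r_def by auto
qed

lemma Orb_r_pointwise_convergent_subseq:
  fixes X :: "'a::metric_space set" and F :: "'a \<Rightarrow> 'a set" and v :: "nat \<Rightarrow> nat \<Rightarrow> 'a"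
  assumes "compact X" "compact_valued_on X F" "usc_on X F"
    and "\<And>k. v k \<in> Orb_r X F"
  shows "\<exists>w r. strict_mono r \<and> w \<in> Orb_r X F \<and> (\<forall>n. (\<lambda>k. v (r k) n) \<longlonglongrightarrow> w n)"
proof -
  have "\<And>k n. v k n \<in> X" using assms(4) unfolding Orb_r_def by auto
  then obtain l r where "strict_mono r" "\<forall>n. (\<lambda>k. v (r k) n) \<longlonglongrightarrow> l n"
    using pointwise_convergent_subseq[OF assms(1)] by blast
  moreover have "l \<in> Orb_r X F"
    by (rule Orb_r_closed_pointwise[OF assms(1,2,3), of "\<lambda>k. v (r k)"]) (use assms(4) calculation in auto)
  ultimately show ?thesis by blast
qed

lemma Orb_r_approx_limit:
  fixes X :: "'a::metric_space set" and F :: "'a \<Rightarrow> 'a set"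
  assumes "compact X" "compact_valued_on X F" "usc_on X F"
    and "\<And>L. W L \<in> Orb_r X F" "\<And>L j. j < L \<Longrightarrow> dist (W L j) (y j) \<le> c"
  shows "\<exists>w\<in>Orb_r X F. \<forall>j. dist (w j) (y j) \<le> c"
proof -
  obtain w r where wr: "strict_mono r" "w \<in> Orb_r X F" "\<forall>n. (\<lambda>k. W (r k) n) \<longlonglongrightarrow> w n"
    using Orb_r_pointwise_convergent_subseq[OF assms(1-3), of W] assms(4) by blast
  have "dist (w j) (y j) \<le> c" for j
  proof (rule LIMSEQ_le_const2[OF tendsto_dist[OF spec[OF wr(3), of j] tendsto_const]])
    show "\<exists>N. \<forall>k\<ge>N. dist (W (r k) j) (y j) \<le> c"
    proof (intro exI allI impI)
      fix k assume "Suc j \<le> k"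
      hence "j < r k" using seq_suble[OF wr(1), of k] by linarith
      thus "dist (W (r k) j) (y j) \<le> c" by (rule assms(5))
    qed
  qed
  with wr(2) show ?thesis by blast
qed

lemma uniformly_expansive:
  fixes X :: "'a::metric_space set" and F :: "'a \<Rightarrow> 'a set"
  assumes "compact X" "compact_valued_on X F" "usc_on X F"
    and exp: "\<forall>x\<in>Orb_r X F. \<forall>y\<in>Orb_r X F. (\<forall>n. dist (x n) (y n) < e) \<longrightarrow> x 0 = y 0"
    and "c < e" "\<epsilon> > 0"
  shows "\<exists>N. \<forall>x\<in>Orb_r X F. \<forall>y\<in>Orb_r X F. (\<forall>n\<le>N. dist (x n) (y n) \<le> c) \<longrightarrow> dist (x 0) (y 0) < \<epsilon>"
proof (rule ccontr)
  assume "\<not> ?thesis"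
  hence "\<forall>N. \<exists>x y. x \<in> Orb_r X F \<and> y \<in> Orb_r X F \<and> (\<forall>n\<le>N. dist (x n) (y n) \<le> c) \<and>
      \<epsilon> \<le> dist (x 0) (y 0)"
    by (auto simp: not_less) blast
  then obtain xs ys where H: "\<And>N. xs N \<in> Orb_r X F" "\<And>N. ys N \<in> Orb_r X F"
     "\<And>N n. n \<le> N \<Longrightarrow> dist (xs N n) (ys N n) \<le> c" "\<And>N. \<epsilon> \<le> dist (xs N 0) (ys N 0)"
    by metis
  obtain xl r1 where 1: "strict_mono r1" "xl \<in> Orb_r X F" "\<forall>n. (\<lambda>k. xs (r1 k) n) \<longlonglongrightarrow> xl n"
    using Orb_r_pointwise_convergent_subseq[OF assms(1,2,3), of xs] H(1) by blast
  obtain yl r2 where 2: "strict_mono r2" "yl \<in> Orb_r X F" "\<forall>n. (\<lambda>k. ys (r1 (r2 k)) n) \<longlonglongrightarrow> yl n"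
    using Orb_r_pointwise_convergent_subseq[OF assms(1,2,3), of "\<lambda>k. ys (r1 k)"] H(2) by blast
  have "(\<lambda>k. xs (r1 (r2 k)) n) \<longlonglongrightarrow> xl n" for n
    using LIMSEQ_subseq_LIMSEQ[OF spec[OF 1(3), of n] 2(1)] by (simp add: o_def)
  hence D: "(\<lambda>k. dist (xs (r1 (r2 k)) n) (ys (r1 (r2 k)) n)) \<longlonglongrightarrow> dist (xl n) (yl n)" for n
    using tendsto_dist 2(3) by blast
  have "k \<le> r1 (r2 k)" for k
    using seq_suble[OF 1(1), of "r2 k"] seq_suble[OF 2(1), of k] by linarith
  hence "dist (xl n) (yl n) \<le> c" for n
    using H(3) by (intro LIMSEQ_le_const2[OF D]) (meson order_trans)
  hence "xl 0 = yl 0" using exp 1(2) 2(2) \<open>c < e\<close> by (meson le_less_trans)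
  moreover have "\<epsilon> \<le> dist (xl 0) (yl 0)"
    by (rule LIMSEQ_le_const[OF D]) (use H(4) in auto)
  ultimately show False using \<open>\<epsilon> > 0\<close> by simp
qed

lemma open_map_near_preimage:
  fixes X :: "'a::metric_space set" and F :: "'a \<Rightarrow> 'a set"
  assumes cX: "compact X" and cv: "compact_valued_on X F" and usc: "usc_on X F"
    and om: "open_map_on X F" and "\<eta> > 0"
  shows "\<exists>\<gamma>>0. \<forall>x\<in>X. \<forall>x'\<in>F x. \<forall>y'\<in>X. dist x' y' < \<gamma> \<longrightarrow> (\<exists>y\<in>X. dist x y < \<eta> \<and> y' \<in> F y)"
proof (rule ccontr)
  assume "\<not> ?thesis"
  hence "\<forall>k::nat. \<exists>x x' y'. x\<in>X \<and> x'\<in>F x \<and> y'\<in>X \<and> dist x' y' < 1 / Suc k \<and>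
      \<not>(\<exists>y\<in>X. dist x y < \<eta> \<and> y' \<in> F y)"
    by (metis of_nat_0_less_iff zero_less_Suc zero_less_divide_1_iff)
  then obtain xs xs' ys' where H: "\<And>k. xs k \<in> X" "\<And>k. xs' k \<in> F (xs k)" "\<And>k. ys' k \<in> X"
    "\<And>k. dist (xs' k) (ys' k) < 1 / Suc k" "\<And>k y. y \<in> X \<Longrightarrow> dist (xs k) y < \<eta> \<Longrightarrow> ys' k \<notin> F y"
    by metis
  have "xs' k \<in> X" for k using H(1,2) cv unfolding compact_valued_on_def by blast
  have sc: "seq_compact X" using cX by (rule compact_imp_seq_compact)
  obtain a r1 where 1: "a \<in> X" "strict_mono r1" "(xs \<circ> r1) \<longlonglongrightarrow> a"
    using seq_compactE[OF sc] H(1) by metis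
  obtain a' r2 where 2: "strict_mono r2" "((xs' \<circ> r1) \<circ> r2) \<longlonglongrightarrow> a'"
    using seq_compactE[OF sc, of "xs' \<circ> r1"] \<open>\<And>k. xs' k \<in> X\<close> by (metis comp_apply)
  define r where "r = r1 \<circ> r2"
  have lim: "a \<in> X" "strict_mono r" "(\<lambda>k. xs (r k)) \<longlonglongrightarrow> a" "(\<lambda>k. xs' (r k)) \<longlonglongrightarrow> a'"
    using 1 2 LIMSEQ_subseq_LIMSEQ[OF 1(3) 2(1)] strict_mono_o[OF 1(2) 2(1)]
    by (simp_all add: r_def o_def)
  have "a' \<in> F a"
    by (rule usc_closed_graph[OF cv usc lim(1), where a'="\<lambda>k. xs (r k)" and b'="\<lambda>k. xs' (r k)"])
       (use H(1,2) lim in auto)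
  define U where "U = X \<inter> ball a (\<eta>/2)"
  have "openin (top_of_set X) U" unfolding U_def by (rule openin_open_Int) simp
  hence "openin (top_of_set X) (\<Union>u\<in>U. F u)" using om unfolding open_map_on_def by blast
  moreover have "a' \<in> (\<Union>u\<in>U. F u)" using \<open>a' \<in> F a\<close> lim(1) \<open>\<eta> > 0\<close> unfolding U_def by auto
  ultimately obtain e where e: "e > 0" "ball a' e \<inter> X \<subseteq> (\<Union>u\<in>U. F u)"
    unfolding openin_contains_ball by blast
  have "eventually (\<lambda>k. dist (xs' (r k)) a' < e/2) sequentially"
    using lim(4) e(1) unfolding tendsto_iff by (meson half_gt_zero)
  moreover have "eventually (\<lambda>k. dist (xs (r k)) a < \<eta>/2) sequentially"
    using lim(3) \<open>\<eta> > 0\<close> unfolding tendsto_iff by (meson half_gt_zero)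
  moreover have "eventually (\<lambda>k. inverse (real (Suc k)) < e/2) sequentially"
    using order_tendstoD(2)[OF LIMSEQ_inverse_real_of_nat, of "e/2"] e(1) by simp
  ultimately have "eventually (\<lambda>k. dist (xs' (r k)) a' < e/2 \<and> dist (xs (r k)) a < \<eta>/2 \<and>
      inverse (real (Suc k)) < e/2) sequentially"
    by (intro eventually_conj)
  then obtain k where k: "dist (xs' (r k)) a' < e/2" "dist (xs (r k)) a < \<eta>/2"
    "inverse (real (Suc k)) < e/2"
    unfolding eventually_sequentially by (metis order_refl)
  have "1 / real (Suc (r k)) \<le> inverse (real (Suc k))"
    using seq_suble[OF lim(2), of k] by (simp add: divide_inverse le_imp_inverse_le)
  hence "dist (ys' (r k)) a' < e"
    using H(4)[of "r k"] k(1,3) dist_triangle[of "ys' (r k)" a' "xs' (r k)"]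
    by (simp add: dist_commute)
  then obtain u where u: "u \<in> U" "ys' (r k) \<in> F u"
    using e(2) H(3) by (auto simp: dist_commute)
  have "dist (xs (r k)) u < \<eta>"
    using u(1) k(2) dist_triangle[of "xs (r k)" u a] unfolding U_def by (simp add: dist_commute)
  moreover have "u \<in> X" using u(1) unfolding U_def by blast
  ultimately show False using H(5) u(2) by blast
qed

lemma exists_near_predecessor:
  fixes X :: "'a::metric_space set" and F :: "'a \<Rightarrow> 'a set"
  assumes "compact X" "compact_valued_on X F" "usc_on X F" "open_map_on X F"
    and exp: "\<forall>x\<in>Orb_r X F. \<forall>y\<in>Orb_r X F. (\<forall>n. dist (x n) (y n) < e) \<longrightarrow> x 0 = y 0"
    and "c < e" "\<eta> > 0"
  shows "\<exists>N. \<forall>x\<in>Orb_r X F. \<forall>v\<in>Orb_r X F. (\<forall>n\<le>N. dist (x (Suc n)) (v n) \<le> c) \<longrightarrow>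
           (\<exists>u\<in>X. dist (x 0) u < \<eta> \<and> v 0 \<in> F u)"
proof -
  obtain \<gamma> where "\<gamma> > 0" and lift: "\<And>x x' y'. x\<in>X \<Longrightarrow> x'\<in>F x \<Longrightarrow> y'\<in>X \<Longrightarrow> dist x' y' < \<gamma> \<Longrightarrow>
      \<exists>y\<in>X. dist x y < \<eta> \<and> y' \<in> F y"
    using open_map_near_preimage[OF assms(1-4,7)] by blast
  obtain N where N: "\<And>x y. x\<in>Orb_r X F \<Longrightarrow> y\<in>Orb_r X F \<Longrightarrow> \<forall>n\<le>N. dist (x n) (y n) \<le> c \<Longrightarrow>
      dist (x 0) (y 0) < \<gamma>"
    using uniformly_expansive[OF assms(1-3) exp \<open>c < e\<close> \<open>\<gamma> > 0\<close>] by blast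
  have "\<exists>u\<in>X. dist (x 0) u < \<eta> \<and> v 0 \<in> F u"
    if "x \<in> Orb_r X F" "v \<in> Orb_r X F" "\<forall>n\<le>N. dist (x (Suc n)) (v n) \<le> c" for x v
  proof (rule lift)
    show "dist (x 1) (v 0) < \<gamma>"
      using N[of "\<lambda>n. x (1 + n)" v] Orb_r_shift_from[of x X F 1] that by simp
    show "x 0 \<in> X" "x 1 \<in> F (x 0)" "v 0 \<in> X"
      using that(1,2) unfolding Orb_r_def by auto
  qed
  then show ?thesis by blast
qed

lemma shadowing_chain:
  fixes X :: "'a::metric_space set" and F :: "'a \<Rightarrow> 'a set"
    and y :: "nat \<Rightarrow> 'a" and z :: "nat \<Rightarrow> nat \<Rightarrow> 'a"
  assumes pred: "\<forall>x\<in>Orb_r X F. \<forall>v\<in>Orb_r X F. (\<forall>n\<le>N. dist (x (Suc n)) (v n) \<le> c) \<longrightarrow>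
           (\<exists>u\<in>X. dist (x 0) u < c' \<and> v 0 \<in> F u)"
    and "0 \<le> c'"
    and "\<forall>m\<le>L. z m \<in> Orb_r X F" "\<forall>m<L. z m 0 = y m" "\<forall>j. z L j = y (L + j)"
    and "\<forall>m<L. \<forall>n\<le>N. dist (z m (Suc n)) (y (Suc m + n)) + c' \<le> c"
  shows "\<exists>v\<in>Orb_r X F. \<forall>j. dist (v j) (y j) \<le> c'"
  using assms(3-)
proof (induction L arbitrary: y z)
  case 0
  have "z 0 \<in> Orb_r X F" using 0(1) by blast
  moreover have "dist (z 0 j) (y j) \<le> c'" for j using 0(3) \<open>0 \<le> c'\<close> by simp
  ultimately show ?case by blast
next
  case (Suc L)
  obtain v where v: "v \<in> Orb_r X F" "\<And>j. dist (v j) (y (Suc j)) \<le> c'"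
  proof -
    have "\<forall>m<L. \<forall>n\<le>N. dist (z (Suc m) (Suc n)) (y (Suc (Suc m + n))) + c' \<le> c"
      using Suc.prems(4) by (auto simp del: add_Suc simp: add_Suc[symmetric])
    then show thesis
      using that Suc.IH[of "\<lambda>m. z (Suc m)" "\<lambda>j. y (Suc j)"] Suc.prems(1-3) by auto
  qed
  have "dist (z 0 (Suc n)) (v n) \<le> c" if "n \<le> N" for n
    using Suc.prems(4)[rule_format, of 0 n] that v(2)[of n]
      dist_triangle[of "z 0 (Suc n)" "v n" "y (Suc n)"]
    by (simp add: dist_commute)
  then obtain u where u: "u \<in> X" "dist (z 0 0) u < c'" "v 0 \<in> F u"
    using pred v(1) Suc.prems(1) by blast
  have "case_nat u v \<in> Orb_r X F" using u v(1) by (simp add: case_nat_in_Orb_r)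
  moreover have "dist (case_nat u v j) (y j) \<le> c'" for j
    using u(2) v(2) Suc.prems(2) by (cases j) (auto simp: dist_commute)
  ultimately show ?case by blast
qed

lemma dist_diagonal_drift:
  fixes z :: "nat \<Rightarrow> nat \<Rightarrow> 'a::metric_space"
  assumes step: "\<And>k j. j \<le> M \<Longrightarrow> dist (z k (Suc j)) (z (Suc k) j) \<le> \<eta>"
    and "i + q \<le> Suc M"
  shows "dist (z k (i + q)) (z (k + i) q) \<le> real i * \<eta>"
  using assms(2)
proof (induction i arbitrary: k)
  case 0
  then show ?case by simp
next
  case (Suc i)
  have "dist (z k (Suc i + q)) (z (k + Suc i) q)
      \<le> dist (z k (Suc (i + q))) (z (Suc k) (i + q)) + dist (z (Suc k) (i + q)) (z (Suc k + i) q)"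
    using dist_triangle by simp
  also have "\<dots> \<le> \<eta> + real i * \<eta>"
    using step[of "i + q" k] Suc.IH[of "Suc k"] Suc.prems by (intro add_mono) auto
  finally show ?case by (simp add: algebra_simps)
qed

lemma pseudo_orbit_drift:
  fixes z :: "nat \<Rightarrow> nat \<Rightarrow> 'a::metric_space"
  assumes "\<And>k k' m n. dist (z k m) (z k' n) \<le> 1"
    and "\<And>k. rho (shift (z k)) (z (Suc k)) < \<eta> / (real (Suc M) * 2 ^ Suc M)"
    and "i + q \<le> Suc M"
  shows "dist (z k (i + q)) (z (k + i) q) \<le> \<eta>"
proof -
  have step: "dist (z k (Suc j)) (z (Suc k) j) \<le> \<eta> / Suc M" if "j \<le> M" for k j
  proof -
    have "rho (shift (z k)) (z (Suc k)) < \<eta> / Suc M / 2 ^ Suc M"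
      using assms(2)[of k] by (simp only: divide_divide_eq_left)
    with assms(1) that have "dist (shift (z k) j) (z (Suc k) j) < \<eta> / Suc M"
      by (intro dist_lt_of_rho_lt) (auto simp: shift_def)
    then show ?thesis by (simp add: shift_def)
  qed
  have "dist (z k (i + q)) (z (k + i) q) \<le> real i * (\<eta> / Suc M)"
    by (rule dist_diagonal_drift[of M z, OF step assms(3)])
  also have "\<dots> \<le> real (Suc M) * (\<eta> / Suc M)"
    using assms(3) order_trans[OF zero_le_dist step[of 0 0]] by (intro mult_right_mono) auto
  finally show ?thesis by simp
qed

lemma shadowing_of_drifting_orbits:
  fixes X :: "'a::metric_space set" and F :: "'a \<Rightarrow> 'a set" and z :: "nat \<Rightarrow> nat \<Rightarrow> 'a"
  assumes "compact X" "compact_valued_on X F" "usc_on X F"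
    and pred: "\<forall>x\<in>Orb_r X F. \<forall>v\<in>Orb_r X F. (\<forall>n\<le>N. dist (x (Suc n)) (v n) \<le> c) \<longrightarrow>
           (\<exists>u\<in>X. dist (x 0) u < c' \<and> v 0 \<in> F u)"
    and "0 \<le> c'" "\<eta> + c' \<le> c"
    and orbits: "\<And>k. z k \<in> Orb_r X F"
    and drift: "\<And>k i q. i + q \<le> Suc N \<Longrightarrow> dist (z k (i + q)) (z (k + i) q) \<le> \<eta>"
  shows "\<exists>w\<in>Orb_r X F. \<forall>j. dist (w j) (z j 0) \<le> c'"
proof -
  define Y where "Y L j = (if j < L then z j 0 else z L (j - L))" for L j
  have "\<exists>v\<in>Orb_r X F. \<forall>j. dist (v j) (Y L j) \<le> c'" for L
  proof (rule shadowing_chain[OF pred \<open>0 \<le> c'\<close>])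
    show "\<forall>m\<le>L. z m \<in> Orb_r X F" "\<forall>m<L. z m 0 = Y L m" "\<forall>j. z L j = Y L (L + j)"
      using orbits by (simp_all add: Y_def)
    show "\<forall>m<L. \<forall>n\<le>N. dist (z m (Suc n)) (Y L (Suc m + n)) + c' \<le> c"
    proof (intro allI impI)
      fix m n assume "m < L" "n \<le> N"
      have "dist (z m (Suc n)) (Y L (Suc m + n)) \<le> \<eta>"
      proof (cases "Suc m + n < L")
        case True
        then show ?thesis using drift[of "Suc n" 0 m] \<open>n \<le> N\<close> by (simp add: Y_def)
      next
        case False
        define i where "i = L - m"
        have "i + (Suc n - i) = Suc n" "m + i = L" "Suc n - i = Suc m + n - L"
          using False \<open>m < L\<close> by (auto simp: i_def)
        moreover have "Y L (Suc m + n) = z L (Suc m + n - L)"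
          using False by (simp add: Y_def)
        ultimately show ?thesis using drift[of i "Suc n - i" m] \<open>n \<le> N\<close> by simp
      qed
      then show "dist (z m (Suc n)) (Y L (Suc m + n)) + c' \<le> c"
        using \<open>\<eta> + c' \<le> c\<close> by linarith
    qed
  qed
  then obtain W where W: "\<And>L. W L \<in> Orb_r X F" "\<And>L j. dist (W L j) (Y L j) \<le> c'"
    by metis
  show ?thesis
  proof (rule Orb_r_approx_limit[OF assms(1-3)])
    show "W L \<in> Orb_r X F" for L by (rule W(1))
    show "dist (W L j) (z j 0) \<le> c'" if "j < L" for L j
      using W(2)[of L j] that by (simp add: Y_def)
  qed
qed

lemma rho_shift_pow_le:
  fixes w :: "nat \<Rightarrow> 'a::metric_space" and z :: "nat \<Rightarrow> nat \<Rightarrow> 'a"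
  assumes "\<And>j k n. dist (w j) (z k n) \<le> 1"
    and "\<And>j. dist (w j) (z j 0) \<le> a"
    and "\<And>k j. j < K \<Longrightarrow> dist (z k j) (z (k + j) 0) \<le> b" and "0 \<le> b"
  shows "rho ((shift ^^ k) w) (z k) \<le> a + b + (1/2)^K"
proof -
  have "rho (\<lambda>n. w (k + n)) (z k) \<le> (a + b) + (1/2)^K"
  proof (rule rho_le_of_initial_dist_le)
    show "dist (w (k + n)) (z k n) \<le> 1" for n by (rule assms(1))
    show "0 \<le> a + b" using order_trans[OF zero_le_dist assms(2)] \<open>0 \<le> b\<close> by (rule add_nonneg_nonneg)
    show "dist (w (k + j)) (z k j) \<le> a + b" if "j < K" for j
      using assms(2)[of "k + j"] assms(3)[OF that, of k]
        dist_triangle[of "w (k + j)" "z k j" "z (k + j) 0"]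
      by (simp add: dist_commute)
  qed
  then show ?thesis by (simp add: funpow_shift)
qed

lemma pseudo_orbit_shadowed:
  fixes X :: "'a::metric_space set" and F :: "'a \<Rightarrow> 'a set" and z :: "nat \<Rightarrow> nat \<Rightarrow> 'a"
  assumes "compact X" "compact_valued_on X F" "usc_on X F" "diameter X \<le> 1"
    and pred: "\<forall>x\<in>Orb_r X F. \<forall>v\<in>Orb_r X F. (\<forall>n\<le>N. dist (x (Suc n)) (v n) \<le> c' + c') \<longrightarrow>
           (\<exists>u\<in>X. dist (x 0) u < c' \<and> v 0 \<in> F u)"
    and "0 \<le> c'" "N \<le> M" "K \<le> M"
    and orbits: "\<And>k. z k \<in> Orb_r X F"
    and pseudo: "\<And>k. rho (shift (z k)) (z (Suc k)) < c' / (real (Suc M) * 2 ^ Suc M)"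
  shows "\<exists>w\<in>Orb_r X F. \<forall>k. rho ((shift ^^ k) w) (z k) \<le> c' + c' + (1/2)^K"
proof -
  have bound: "dist (x m) (y n) \<le> 1" if "x \<in> Orb_r X F" "y \<in> Orb_r X F" for x y m n
    using Orb_r_dist_le_diameter[OF compact_imp_bounded[OF assms(1)] that, of m n] assms(4) by linarith
  have drift: "dist (z k (i + q)) (z (k + i) q) \<le> c'" if "i + q \<le> Suc M" for k i q
  proof (rule pseudo_orbit_drift[where z=z and M=M])
    show "dist (z k m) (z k' n) \<le> 1" for k k' m n using bound orbits by blast
  qed (fact pseudo that)+
  have "\<exists>w\<in>Orb_r X F. \<forall>j. dist (w j) (z j 0) \<le> c'"
  proof (rule shadowing_of_drifting_orbits[OF assms(1-3) pred \<open>0 \<le> c'\<close> order_refl orbits])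
    show "dist (z k (i + q)) (z (k + i) q) \<le> c'" if "i + q \<le> Suc N" for k i q
      using drift that \<open>N \<le> M\<close> by simp
  qed
  then obtain w where w: "w \<in> Orb_r X F" "\<And>j. dist (w j) (z j 0) \<le> c'"
    by blast
  have "rho ((shift ^^ k) w) (z k) \<le> c' + c' + (1/2)^K" for k
  proof (rule rho_shift_pow_le[where a=c' and b=c'])
    show "dist (w j) (z k m) \<le> 1" for j k m using bound w(1) orbits by blast
    show "dist (z k j) (z (k + j) 0) \<le> c'" if "j < K" for k j
      using drift[of j 0 k] that \<open>K \<le> M\<close> by simp
  qed (fact w(2) \<open>0 \<le> c'\<close>)+
  with w(1) show ?thesis by blast
qed

theorem theorem3p8:
  fixes X :: "'a::metric_space set" and F :: "'a \<Rightarrow> 'a set"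
  assumes "compact X" and "X \<noteq> {}" and "diameter X = 1"
    and "compact_valued_on X F"
    and "expansive_on X F"
    and "usc_on X F"
    and "open_map_on X F"
  shows "shadowing_on (Orb_r X F) rho shift"
  unfolding shadowing_on_def
proof (intro allI impI)
  fix \<epsilon> :: real assume "\<epsilon> > 0"
  obtain e where "e > 0" and exp: "\<forall>x\<in>Orb_r X F. \<forall>y\<in>Orb_r X F. (\<forall>n. dist (x n) (y n) < e) \<longrightarrow> x 0 = y 0"
    using assms(5) unfolding expansive_on_def by blast
  define c' where "c' = min (e/4) (\<epsilon>/8)"
  have c': "0 < c'" "c' + c' < e" "c' + c' < \<epsilon>/2"
    using \<open>e > 0\<close> \<open>\<epsilon> > 0\<close> by (auto simp: c'_def)
  obtain N where pred: "\<forall>x\<in>Orb_r X F. \<forall>v\<in>Orb_r X F. (\<forall>n\<le>N. dist (x (Suc n)) (v n) \<le> c' + c') \<longrightarrow>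
      (\<exists>u\<in>X. dist (x 0) u < c' \<and> v 0 \<in> F u)"
    using exists_near_predecessor[OF assms(1,4,6,7) exp c'(2,1)] by blast
  obtain K where K: "(1/2::real) ^ K < \<epsilon>/2"
    using real_arch_pow_inv[of "\<epsilon>/2" "1/2"] \<open>\<epsilon> > 0\<close> by auto
  define M where "M = max N K"
  have "\<exists>w\<in>Orb_r X F. \<forall>n. rho ((shift ^^ n) w) (z n) < \<epsilon>"
    if "\<forall>n. z n \<in> Orb_r X F" "\<forall>n. rho (shift (z n)) (z (Suc n)) < c' / (real (Suc M) * 2 ^ Suc M)"
    for z
  proof -
    have "\<exists>w\<in>Orb_r X F. \<forall>k. rho ((shift ^^ k) w) (z k) \<le> c' + c' + (1/2)^K"
      by (rule pseudo_orbit_shadowed[where c'=c' and M=M and K=K, OF assms(1,4,6) _ pred])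
        (use assms(3) c'(1) that in \<open>auto simp: M_def\<close>)
    then show ?thesis
      using c'(3) K by (smt (verit) field_sum_of_halves)
  qed
  moreover have "c' / (real (Suc M) * 2 ^ Suc M) > 0" using c'(1) by simp
  ultimately show "\<exists>\<delta>>0. \<forall>z. (\<forall>n. z n \<in> Orb_r X F) \<longrightarrow> (\<forall>n. rho (shift (z n)) (z (Suc n)) < \<delta>) \<longrightarrow>
      (\<exists>w\<in>Orb_r X F. \<forall>n. rho ((shift ^^ n) w) (z n) < \<epsilon>)"
    by blast
qed

end
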